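(* Let $X$ be a $\mathcal K$-analytic space and $Y\supset X$ a space. Then \[ \mathrm{Compl}_{\mathrm{loc}}(X,Y)\le\mathrm{Compl}_{\overline{\mathrm{loc}}}(X,Y)\le\mathrm{Compl}(X,Y)\le\mathrm{Compl}_{\mathrm{loc}}(X,Y)+1. \] Moreover, if $\mathrm{Compl}_{\mathrm{loc}}(X,Y)$ is odd or $\mathrm{Compl}(X,Y)$ is even, then $\mathrm{Compl}_{\mathrm{loc}}(X,Y)=\mathrm{Compl}_{\overline{\mathrm{loc}}}(X,Y)=\mathrm{Compl}(X,Y)$. If $Y$ is compact, then $\mathrm{Compl}(X,Y)=\mathrm{Compl}_{\overline{\mathrm{loc}}}(X,Y)=\max_{y\in Y}\mathrm{Compl}_y(X,Y)$.
   Context: All spaces are Tychonoff. $\mathcal F$-Borel hierarchy: $\mathcal F_0(Y)$ closed sets; for $0<\alpha<\omega_1$, $\mathcal F_\alpha(Y)$ = countable unions (odd $\alpha$) or countable intersections (even $\alpha$) of members of $\bigcup_{\beta<\alpha}\mathcal F_\beta(Y)$ (parity of $\lambda+m$, $\lambda$ limit or $0$, is that of $m$); $\mathcal F_{\omega_1}(Y)$ = Suslin-$\mathcal F$ sets $\bigcup_{\sigma\in\omega^\omega}\bigcap_k F_{\sigma(0),\dots,\sigma(k)}$ with closed $F$'s. A space is $\mathcal K$-analytic if it is Suslin-$\mathcal F$ in some compact space; then $X\in\mathcal F_{\omega_1}(Y)$ for every $Y\supset X$. $\mathrm{Compl}(A,Y)$ = least $\alpha\le\omega_1$ with $A\in\mathcal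 F_\alpha(Y)$. Local complexity: for $y\in Y$, $\mathrm{Compl}_y(X,Y)=\min\{\mathrm{Compl}(\overline U^Y\cap X,Y): U$ a neighborhood of $y$ in $Y\}$; $\mathrm{Compl}_{\mathrm{loc}}(X,Y)=\sup_{x\in X}\mathrm{Compl}_x(X,Y)$; $\mathrm{Compl}_{\overline{\mathrm{loc}}}(X,Y)=\sup_{y\in Y}\mathrm{Compl}_y(X,Y)$. *)

theory Defs
  imports "HOL-Analysis.Analysis"
begin

text \<open>Countable ordinals together with omega_1 are modelled by any well-ordered
type whose order type is omega_1 + 1: it has a greatest element (omega_1),
the set of elements below it is uncountable, and every element below it has
only countably many predecessors.\<close>

definition omega1 :: "'o::wellorder" where
  "omega1 = (GREATEST x. True)"

definition omega1_plus_one :: "'o::wellorder itself \<Rightarrow> bool" where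
  "omega1_plus_one T \<longleftrightarrow>
     (\<exists>t::'o. \<forall>x. x \<le> t) \<and>
     uncountable {x::'o. x < omega1} \<and>
     (\<forall>x::'o. x < omega1 \<longrightarrow> countable {y. y < x})"

definition ord_zero :: "'o::wellorder" where
  "ord_zero = (LEAST x. True)"

definition limit_or_zero :: "'o::wellorder \<Rightarrow> bool" where
  "limit_or_zero l \<longleftrightarrow> (\<forall>b<l. \<exists>c. b < c \<and> c < l)"

text \<open>alpha = lambda + m with lambda limit or 0; alpha is odd iff m is odd.\<close>
definition ord_odd :: "'o::wellorder \<Rightarrow> bool" where
  "ord_odd a \<longleftrightarrow> (\<exists>l. limit_or_zero l \<and> l \<le> a \<and> finite {l..<a} \<and> odd (card {l..<a}))"

definition ord_even :: "'o::wellorder \<Rightarrow> bool" where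
  "ord_even a \<longleftrightarrow> \<not> ord_odd a"

text \<open>Successor alpha + 1 (omega_1 + 1 is capped at omega_1, the top element;
this is harmless since all complexities are at most omega_1).\<close>
definition osucc :: "'o::wellorder \<Rightarrow> 'o" where
  "osucc a = (if \<exists>b. a < b then (LEAST b. a < b) else a)"

definition ord_sup :: "'o::wellorder set \<Rightarrow> 'o" where
  "ord_sup S = (LEAST a. \<forall>b\<in>S. b \<le> a)"

definition tychonoff_space :: "'a topology \<Rightarrow> bool" where
  "tychonoff_space Y \<longleftrightarrow> completely_regular_space Y \<and> Hausdorff_space Y"

definition suslinF :: "'a topology \<Rightarrow> 'a set \<Rightarrow> bool" where
  "suslinF Y A \<longleftrightarrow> (\<exists>F :: nat list \<Rightarrow> 'a set.
      (\<forall>s. closedin Y (F s)) \<and>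
      A = (\<Union>\<sigma>::nat\<Rightarrow>nat. \<Inter>k. F (map \<sigma> [0..<Suc k])))"

definition K_analytic_via :: "'a topology \<Rightarrow> 'a set \<Rightarrow> 'b topology \<Rightarrow> ('a \<Rightarrow> 'b) \<Rightarrow> bool" where
  "K_analytic_via Y X K f \<longleftrightarrow>
     compact_space K \<and> Hausdorff_space K \<and>
     embedding_map (subtopology Y X) K f \<and> suslinF K (f ` X)"

inductive Fclass :: "'a topology \<Rightarrow> 'o::wellorder \<Rightarrow> 'a set \<Rightarrow> bool"
  for Y :: "'a topology" where
  closed: "closedin Y A \<Longrightarrow> Fclass Y ord_zero A"
| union: "ord_zero < a \<Longrightarrow> a < omega1 \<Longrightarrow> ord_odd a \<Longrightarrow> countable \<A> \<Longrightarrow>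
           (\<forall>A\<in>\<A>. \<exists>b<a. Fclass Y b A) \<Longrightarrow> Fclass Y a (\<Union>\<A>)"
| inter: "ord_zero < a \<Longrightarrow> a < omega1 \<Longrightarrow> ord_even a \<Longrightarrow> countable \<A> \<Longrightarrow>
           (\<forall>A\<in>\<A>. \<exists>b<a. Fclass Y b A) \<Longrightarrow> Fclass Y a (topspace Y \<inter> \<Inter>\<A>)"
| suslin: "suslinF Y A \<Longrightarrow> Fclass Y omega1 A"

definition Compl :: "'o::wellorder itself \<Rightarrow> 'a topology \<Rightarrow> 'a set \<Rightarrow> 'o" where
  "Compl T Y A = (LEAST a::'o. Fclass Y a A)"

definition neighbourhood :: "'a topology \<Rightarrow> 'a set \<Rightarrow> 'a \<Rightarrow> bool" where
  "neighbourhood Y U y \<longleftrightarrow> U \<subseteq> topspace Y \<and> (\<exists>V. openin Y V \<and> y \<in> V \<and> V \<subseteq> U)"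

definition Compl_at :: "'o::wellorder itself \<Rightarrow> 'a topology \<Rightarrow> 'a set \<Rightarrow> 'a \<Rightarrow> 'o" where
  "Compl_at T Y X y =
     (LEAST a::'o. \<exists>U. neighbourhood Y U y \<and> a = Compl T Y ((Y closure_of U) \<inter> X))"

definition Compl_loc :: "'o::wellorder itself \<Rightarrow> 'a topology \<Rightarrow> 'a set \<Rightarrow> 'o" where
  "Compl_loc T Y X = ord_sup ((\<lambda>x. Compl_at T Y X x) ` X)"

definition Compl_cloc :: "'o::wellorder itself \<Rightarrow> 'a topology \<Rightarrow> 'a set \<Rightarrow> 'o" where
  "Compl_cloc T Y X = ord_sup ((\<lambda>y. Compl_at T Y X y) ` topspace Y)"

end

(*
  A K-analytic X is Suslin-F in Y (pull the Suslin scheme back through the embedding and take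
  closures; Hausdorffness of Y separates a point outside X from the compact preimage of each
  branch) and it is Lindelof (an uncountable-subcover obstruction would propagate along an
  infinite branch of the scheme and contradict compactness of K). By Lindelof, X is the union
  of countably many pieces cl(U) \<inter> X with complexity at most Compl_loc; a countable union
  stays at that level if it is odd and needs one more step if it is even. This gives
  Compl <= Compl_loc + 1 and, under either parity assumption, equality throughout. For compact Y
  finitely many pieces suffice, and finite unions do not raise the complexity.
*)

theory Submission
  imports Defs
begin

lemma compact_space_decseq_subset_openin:
  fixes C :: "nat \<Rightarrow> 'a set"
  assumes K: "compact_space K" and C: "\<And>n. closedin K (C n)" and dec: "decseq C"
    and U: "openin K U" and sub: "(\<Inter>n. C n) \<subseteq> U"
  obtains m where "C m \<subseteq> U"
proof (rule ccontr)
  assume "\<not> thesis"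
  then have "C n - U \<noteq> {}" for n using that by blast
  moreover have "decseq (\<lambda>n. C n - U)" using dec by (auto simp: decseq_def)
  ultimately have "(\<Inter>n. C n - U) \<noteq> {}"
    using compact_space_imp_nest[OF K, of "\<lambda>n. C n - U"] C U by blast
  then show False using sub by blast
qed

lemma suslinF_subset_topspace: "suslinF Y A \<Longrightarrow> A \<subseteq> topspace Y"
  unfolding suslinF_def by (blast dest: closedin_subset)

lemma suslinF_decreasing_scheme:
  assumes "suslinF Y A"
  obtains F where "\<And>s. closedin Y (F s)" "\<And>s t. F (s @ t) \<subseteq> F s"
    "A = (\<Union>\<sigma>::nat\<Rightarrow>nat. \<Inter>k. F (map \<sigma> [0..<Suc k]))"
proof -
  obtain F where F: "\<And>s. closedin Y (F s)" and A: "A = (\<Union>\<sigma>::nat\<Rightarrow>nat. \<Inter>k. F (map \<sigma> [0..<Suc k]))"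
    using assms unfolding suslinF_def by blast
  define G where "G s = \<Inter>(insert (topspace Y) {F (take (Suc i) s) | i. i < length s})" for s
  show thesis
  proof (rule that)
    show "closedin Y (G s)" for s
      unfolding G_def using F by (intro closedin_Inter) auto
    show "G (s @ t) \<subseteq> G s" for s t
    proof -
      have "{F (take (Suc i) s) | i. i < length s} \<subseteq> {F (take (Suc i) (s @ t)) | i. i < length (s @ t)}"
      proof
        fix B assume "B \<in> {F (take (Suc i) s) | i. i < length s}"
        then obtain i where "B = F (take (Suc i) s)" "i < length s" by blast
        then show "B \<in> {F (take (Suc i) (s @ t)) | i. i < length (s @ t)}"
          by (intro CollectI exI[of _ i]) simp
      qed
      then show ?thesis unfolding G_def by (intro Inter_anti_mono insert_mono)
    qed
    have G_map: "G (map \<sigma> [0..<Suc k]) = topspace Y \<inter> (\<Inter>i\<le>k. F (map \<sigma> [0..<Suc i]))" for \<sigma> k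
      unfolding G_def by (auto simp: take_map take_upt less_Suc_eq_le simp del: upt_Suc)
    have "(\<Inter>k. G (map \<sigma> [0..<Suc k])) = (\<Inter>k. F (map \<sigma> [0..<Suc k]))" for \<sigma>
    proof
      show "(\<Inter>k. G (map \<sigma> [0..<Suc k])) \<subseteq> (\<Inter>k. F (map \<sigma> [0..<Suc k]))"
        unfolding G_map by blast
      show "(\<Inter>k. F (map \<sigma> [0..<Suc k])) \<subseteq> (\<Inter>k. G (map \<sigma> [0..<Suc k]))"
        unfolding G_map using closedin_subset[OF F] by blast
    qed
    then show "A = (\<Union>\<sigma>. \<Inter>k. G (map \<sigma> [0..<Suc k]))"
      unfolding A by (simp del: upt_Suc)
  qed
qed

lemma decseq_decreasing_scheme:
  "(\<And>s t. F (s @ t) \<subseteq> F s) \<Longrightarrow> decseq (\<lambda>k. F (map \<sigma> [0..<Suc k]))"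
  by (rule decseq_SucI) (metis map_append upt_Suc_append zero_le list.simps(8,9))

lemma nat_list_branch:
  assumes "P []" and "\<And>s. P s \<Longrightarrow> \<exists>n. P (s @ [n])"
  obtains \<sigma> :: "nat \<Rightarrow> 'a" where "\<And>k. P (map \<sigma> [0..<k])"
proof -
  have "\<exists>sq. \<forall>k. (P (sq k) \<and> length (sq k) = k) \<and> (\<exists>n. sq (Suc k) = sq k @ [n])"
  proof (rule dependent_nat_choice)
    show "\<exists>s. P s \<and> length s = 0" using assms(1) by auto
    fix s k assume s: "P s \<and> length s = k"
    then obtain n where "P (s @ [n])" using assms(2) by blast
    then show "\<exists>t. (P t \<and> length t = Suc k) \<and> (\<exists>n. t = s @ [n])" using s by auto
  qed
  then obtain sq where sq: "\<And>k. P (sq k)" "\<And>k. length (sq k) = k" "\<And>k. \<exists>n. sq (Suc k) = sq k @ [n]"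
    by blast
  define \<sigma> where "\<sigma> k = sq (Suc k) ! k" for k
  have "map \<sigma> [0..<k] = sq k" for k
  proof (induction k)
    case 0
    then show ?case using sq(2)[of 0] by simp
  next
    case (Suc k)
    obtain n where "sq (Suc k) = sq k @ [n]" using sq(3) by blast
    then show ?case using Suc sq(2)[of k] by (simp add: \<sigma>_def nth_append)
  qed
  then show thesis using that sq(1) by metis
qed

definition suslin_part :: "(nat list \<Rightarrow> 'a set) \<Rightarrow> nat list \<Rightarrow> 'a set" where
  "suslin_part F s = (\<Union>\<sigma>\<in>{\<sigma>. map \<sigma> [0..<length s] = s}. \<Inter>k. F (map \<sigma> [0..<Suc k]))"

lemma suslin_part_Nil: "suslin_part F [] = (\<Union>\<sigma>. \<Inter>k. F (map \<sigma> [0..<Suc k]))"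
  unfolding suslin_part_def by simp

lemma suslin_part_subset_UN: "suslin_part F s \<subseteq> (\<Union>n. suslin_part F (s @ [n]))"
proof
  fix x assume "x \<in> suslin_part F s"
  then obtain \<sigma> where "map \<sigma> [0..<length s] = s" "x \<in> (\<Inter>k. F (map \<sigma> [0..<Suc k]))"
    unfolding suslin_part_def by blast
  then show "x \<in> (\<Union>n. suslin_part F (s @ [n]))"
    unfolding suslin_part_def by (intro UN_I[of "\<sigma> (length s)"] UN_I[of \<sigma>]) auto
qed

lemma suslin_part_subset: "s \<noteq> [] \<Longrightarrow> suslin_part F s \<subseteq> F s"
proof
  fix x assume "s \<noteq> []" and "x \<in> suslin_part F s"
  then obtain \<sigma> where \<sigma>: "map \<sigma> [0..<length s] = s" and x: "x \<in> (\<Inter>k. F (map \<sigma> [0..<Suc k]))"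
    unfolding suslin_part_def by blast
  obtain m where "length s = Suc m" using \<open>s \<noteq> []\<close> by (cases s) auto
  then show "x \<in> F s" using \<sigma> x by (metis INT_iff UNIV_I)
qed

lemma Lindelof_space_suslinF:
  assumes K: "compact_space K" and "suslinF K A"
  shows "Lindelof_space (subtopology K A)"
proof -
  obtain F where F: "\<And>s. closedin K (F s)" and dec: "\<And>s t. F (s @ t) \<subseteq> F s"
    and A: "A = (\<Union>\<sigma>::nat\<Rightarrow>nat. \<Inter>k. F (map \<sigma> [0..<Suc k]))"
    using suslinF_decreasing_scheme[OF \<open>suslinF K A\<close>] by blast
  have "\<exists>\<V>. countable \<V> \<and> \<V> \<subseteq> \<U> \<and> A \<subseteq> \<Union>\<V>"
    if \<U>: "\<forall>U\<in>\<U>. openin K U" and cov: "A \<subseteq> \<Union>\<U>" for \<U>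
  proof (rule ccontr)
    define bad where "bad s \<longleftrightarrow> \<not> (\<exists>\<V>\<subseteq>\<U>. countable \<V> \<and> suslin_part F s \<subseteq> \<Union>\<V>)" for s
    assume "\<nexists>\<V>. countable \<V> \<and> \<V> \<subseteq> \<U> \<and> A \<subseteq> \<Union>\<V>"
    then have bad_Nil: "bad []" unfolding bad_def suslin_part_Nil A by blast
    have bad_extend: "\<exists>n. bad (s @ [n])" if "bad s" for s
    proof (rule ccontr)
      assume "\<nexists>n. bad (s @ [n])"
      then have "\<exists>\<W>. \<W> \<subseteq> \<U> \<and> countable \<W> \<and> suslin_part F (s @ [n]) \<subseteq> \<Union>\<W>" for n
        unfolding bad_def by blast
      then obtain \<V> where \<V>_sub: "\<And>n. \<V> n \<subseteq> \<U>" and \<V>_countable: "\<And>n. countable (\<V> n)"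
        and \<V>_cover: "\<And>n. suslin_part F (s @ [n]) \<subseteq> \<Union>(\<V> n)"
        by metis
      have "suslin_part F s \<subseteq> (\<Union>n. suslin_part F (s @ [n]))"
        by (rule suslin_part_subset_UN)
      also have "\<dots> \<subseteq> \<Union>(\<Union>n. \<V> n)"
        using \<V>_cover by blast
      finally have "suslin_part F s \<subseteq> \<Union>(\<Union>n. \<V> n)" .
      moreover have "(\<Union>n. \<V> n) \<subseteq> \<U>" "countable (\<Union>n. \<V> n)"
        using \<V>_sub \<V>_countable by auto
      ultimately show False using \<open>bad s\<close> unfolding bad_def by blast
    qed
    obtain \<sigma> :: "nat \<Rightarrow> nat" where bad: "\<And>k. bad (map \<sigma> [0..<k])"
      using nat_list_branch[of bad, OF bad_Nil bad_extend] by blast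
    define C where "C k = F (map \<sigma> [0..<Suc k])" for k
    have "(\<Inter>k. C k) \<subseteq> \<Union>\<U>" using cov unfolding A C_def by blast
    moreover have "compactin K (\<Inter>k. C k)"
      using K F unfolding C_def by (intro closedin_compact_space) auto
    ultimately obtain \<O> where \<O>: "finite \<O>" "\<O> \<subseteq> \<U>" "(\<Inter>k. C k) \<subseteq> \<Union>\<O>"
      using \<U> unfolding compactin_def by metis
    moreover have "openin K (\<Union>\<O>)" using \<O>(2) \<U> by blast
    ultimately obtain m where m: "C m \<subseteq> \<Union>\<O>"
      using compact_space_decseq_subset_openin[OF K _ decseq_decreasing_scheme[OF dec]] F
      unfolding C_def by blast
    have "suslin_part F (map \<sigma> [0..<Suc m]) \<subseteq> \<Union>\<O>"
      using suslin_part_subset[of "map \<sigma> [0..<Suc m]" F] m unfolding C_def by simp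
    then have "\<not> bad (map \<sigma> [0..<Suc m])"
      using \<O>(1,2) countable_finite unfolding bad_def by blast
    then show False using bad by blast
  qed
  then show ?thesis
    unfolding Lindelof_space_subtopology_subset[OF suslinF_subset_topspace[OF \<open>suslinF K A\<close>]]
    by blast
qed

lemma K_analytic_via_homeomorphic_map:
  assumes "X \<subseteq> topspace Y" and "K_analytic_via Y X K f"
  shows "homeomorphic_map (subtopology Y X) (subtopology K (f ` X)) f"
  using assms unfolding K_analytic_via_def embedding_map_def by (simp add: inf.absorb2)

lemma K_analytic_via_Lindelof_space:
  assumes "X \<subseteq> topspace Y" and "K_analytic_via Y X K f"
  shows "Lindelof_space (subtopology Y X)"
proof -
  obtain g where "homeomorphic_maps (subtopology Y X) (subtopology K (f ` X)) f g"
    using K_analytic_via_homeomorphic_map[OF assms] homeomorphic_map_maps by blast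
  then have "homeomorphic_map (subtopology K (f ` X)) (subtopology Y X) g"
    by (simp add: homeomorphic_maps_map)
  moreover have "Lindelof_space (subtopology K (f ` X))"
    using assms(2) unfolding K_analytic_via_def by (blast intro: Lindelof_space_suslinF)
  ultimately show ?thesis
    by (metis Lindelof_space_continuous_map_image homeomorphic_imp_continuous_map
        homeomorphic_imp_surjective_map)
qed

lemma Inter_closure_preimage_subset:
  assumes Y: "Hausdorff_space Y" and XY: "X \<subseteq> topspace Y" and K: "compact_space K"
    and hom: "homeomorphic_map (subtopology Y X) (subtopology K (f ` X)) f"
    and C: "\<And>k. closedin K (C k)" and "decseq C" and CX: "(\<Inter>k. C k) \<subseteq> f ` X"
  shows "(\<Inter>k. Y closure_of (X \<inter> f -` C k)) \<subseteq> X"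
proof
  fix y assume y: "y \<in> (\<Inter>k. Y closure_of (X \<inter> f -` C k))"
  show "y \<in> X"
  proof (rule ccontr)
    assume "y \<notin> X"
    have top: "topspace (subtopology Y X) = X" using XY by (simp add: inf.absorb2)
    define D where "D = X \<inter> f -` (\<Inter>k. C k)"
    have "f ` D = (\<Inter>k. C k)" using CX unfolding D_def by blast
    moreover have "compactin K (\<Inter>k. C k)"
      using K C by (intro closedin_compact_space) auto
    ultimately have D_compact: "compactin Y D"
      using homeomorphic_map_compactness_eq[OF hom, of D] top XY
      by (auto simp: compactin_subtopology D_def)
    have "y \<in> topspace Y" using y by (auto simp: in_closure_of)
    then have "compactin Y {y}" by simp
    moreover have "disjnt D {y}" using \<open>y \<notin> X\<close> unfolding D_def by simp
    ultimately obtain V W where V: "openin Y V" "D \<subseteq> V" and W: "openin Y W" "y \<in> W" "disjnt V W"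
      using Hausdorff_space_compact_separation[OF Y D_compact] by (metis insert_subset)
    have "X \<inter> V \<subseteq> topspace (subtopology Y X)" using top by blast
    then have "openin (subtopology K (f ` X)) (f ` (X \<inter> V))"
      using homeomorphic_map_openness[OF hom] openin_subtopology_Int2[OF V(1)] by simp
    then obtain O' where O': "openin K O'" "f ` (X \<inter> V) = O' \<inter> f ` X"
      unfolding openin_subtopology by blast
    have "D \<subseteq> X \<inter> V" using V(2) unfolding D_def by auto
    then have "(\<Inter>k. C k) \<subseteq> f ` (X \<inter> V)"
      unfolding \<open>f ` D = (\<Inter>k. C k)\<close>[symmetric] by (rule image_mono)
    then have "(\<Inter>k. C k) \<subseteq> O'" using O'(2) by auto
    then obtain m where "C m \<subseteq> O'"
      using compact_space_decseq_subset_openin[of K C O', OF K C \<open>decseq C\<close> O'(1)] by blast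
    have "X \<inter> f -` C m \<subseteq> V"
    proof
      fix x assume x: "x \<in> X \<inter> f -` C m"
      then have "f x \<in> f ` (X \<inter> V)" using O'(2) \<open>C m \<subseteq> O'\<close> by blast
      moreover have "inj_on f X" using homeomorphic_imp_injective_map[OF hom] top by simp
      ultimately show "x \<in> V" using x unfolding inj_on_def by blast
    qed
    moreover have "y \<in> Y closure_of (X \<inter> f -` C m)" using y by blast
    ultimately have "y \<in> Y closure_of V" using closure_of_mono by blast
    then show False using W unfolding in_closure_of disjnt_def by blast
  qed
qed

lemma K_analytic_via_suslinF:
  assumes Y: "Hausdorff_space Y" and XY: "X \<subseteq> topspace Y" and KA: "K_analytic_via Y X K f"
  shows "suslinF Y X"
proof -
  have K: "compact_space K" and "suslinF K (f ` X)"
    using KA unfolding K_analytic_via_def by auto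
  obtain F where F: "\<And>s. closedin K (F s)" and dec: "\<And>s t. F (s @ t) \<subseteq> F s"
    and fX: "f ` X = (\<Union>\<sigma>::nat\<Rightarrow>nat. \<Inter>k. F (map \<sigma> [0..<Suc k]))"
    using suslinF_decreasing_scheme[OF \<open>suslinF K (f ` X)\<close>] by blast
  define E where "E s = Y closure_of (X \<inter> f -` F s)" for s
  have "X = (\<Union>\<sigma>::nat\<Rightarrow>nat. \<Inter>k. E (map \<sigma> [0..<Suc k]))"
  proof (intro equalityI subsetI)
    fix x assume x: "x \<in> X"
    then have "f x \<in> f ` X" by blast
    then obtain \<sigma> where "\<And>k. f x \<in> F (map \<sigma> [0..<Suc k])" unfolding fX by blast
    moreover have "X \<inter> f -` F s \<subseteq> E s" for s
      unfolding E_def using XY by (intro closure_of_subset) auto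
    ultimately have "x \<in> E (map \<sigma> [0..<Suc k])" for k using x by blast
    then show "x \<in> (\<Union>\<sigma>. \<Inter>k. E (map \<sigma> [0..<Suc k]))" by blast
  next
    fix y assume "y \<in> (\<Union>\<sigma>. \<Inter>k. E (map \<sigma> [0..<Suc k]))"
    then obtain \<sigma> where "y \<in> (\<Inter>k. Y closure_of (X \<inter> f -` F (map \<sigma> [0..<Suc k])))"
      unfolding E_def by blast
    moreover have "(\<Inter>k. F (map \<sigma> [0..<Suc k])) \<subseteq> f ` X" unfolding fX by blast
    ultimately show "y \<in> X"
      using Inter_closure_preimage_subset[OF Y XY K K_analytic_via_homeomorphic_map[OF XY KA]
          F decseq_decreasing_scheme[OF dec]] by blast
  qed
  moreover have "closedin Y (E s)" for s unfolding E_def by simp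
  ultimately show ?thesis unfolding suslinF_def by blast
qed

lemma le_omega1:
  assumes "omega1_plus_one (T::'o::wellorder itself)"
  shows "(x::'o) \<le> omega1"
proof -
  obtain t :: 'o where t: "\<forall>x. x \<le> t" using assms unfolding omega1_plus_one_def by blast
  have "omega1 = t" unfolding omega1_def by (rule Greatest_equality) (use t in auto)
  then show ?thesis using t by simp
qed

lemma ord_zero_le: "(ord_zero::'o::wellorder) \<le> x"
  unfolding ord_zero_def by (rule Least_le) simp

lemma osucc_le: "a < b \<Longrightarrow> osucc a \<le> (b::'o::wellorder)"
  unfolding osucc_def by (auto intro: Least_le)

lemma less_osucc: "a < b \<Longrightarrow> a < osucc (a::'o::wellorder)"
  unfolding osucc_def by (auto intro: LeastI)

lemma le_osucc: "a \<le> osucc (a::'o::wellorder)"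
  by (metis less_imp_le order_refl osucc_def less_osucc)

lemma le_of_less_osucc: "x < osucc a \<Longrightarrow> x \<le> (a::'o::wellorder)"
  by (metis leD leI osucc_le)

lemma osucc_less_omega1:
  assumes T: "omega1_plus_one (T::'o::wellorder itself)" and a: "(a::'o) < omega1"
  shows "osucc a < omega1"
proof (rule ccontr)
  assume "\<not> osucc a < omega1"
  then have "osucc a = omega1" using le_omega1[OF T, of "osucc a"] by simp
  then have "{x::'o. x < omega1} \<subseteq> insert a {y. y < a}"
    using le_of_less_osucc[of _ a] by fastforce
  moreover have "countable (insert a {y. y < a})" using T a unfolding omega1_plus_one_def by simp
  ultimately show False using T countable_subset unfolding omega1_plus_one_def by blast
qed

lemma ex_limit_or_zero_finite_gap:
  obtains l :: "'o::wellorder" where "limit_or_zero l" "l \<le> a" "finite {l..<a}"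
proof -
  define l where "l = (LEAST l. l \<le> a \<and> finite {l..<a})"
  have l: "l \<le> a \<and> finite {l..<a}" unfolding l_def by (rule LeastI[of _ a]) simp
  have "limit_or_zero l"
    unfolding limit_or_zero_def
  proof (intro allI impI)
    fix b assume "b < l"
    show "\<exists>c. b < c \<and> c < l"
    proof (rule ccontr)
      assume no_between: "\<nexists>c. b < c \<and> c < l"
      have "{b..<a} \<subseteq> insert b {l..<a}"
      proof
        fix x assume x: "x \<in> {b..<a}"
        show "x \<in> insert b {l..<a}"
        proof (cases "x = b")
          case False
          then have "l \<le> x" using x no_between
            by (meson atLeastLessThan_iff not_le order.not_eq_order_implies_strict)
          then show ?thesis using x by auto
        qed simp
      qed
      then have "finite {b..<a}" using l by (meson finite_insert finite_subset)
      then have "b \<le> a \<and> finite {b..<a}" using l \<open>b < l\<close> by auto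
      then have "l \<le> b" unfolding l_def by (rule Least_le)
      then show False using \<open>b < l\<close> by simp
    qed
  qed
  then show thesis using that l by blast
qed

lemma ord_odd_osucc:
  assumes "ord_even (a::'o::wellorder)" and "a < b"
  shows "ord_odd (osucc a)"
proof -
  obtain l where l: "limit_or_zero l" "l \<le> a" "finite {l..<a}"
    using ex_limit_or_zero_finite_gap .
  then have "even (card {l..<a})" using assms(1) unfolding ord_even_def ord_odd_def by blast
  have "a < osucc a" using less_osucc[OF assms(2)] .
  then have "{l..<osucc a} = insert a {l..<a}"
    using l(2) le_of_less_osucc[of _ a] by (auto simp: order.strict_iff_order)
  then show ?thesis
    unfolding ord_odd_def using l \<open>even (card {l..<a})\<close> \<open>a < osucc a\<close>
    by (intro exI[of _ l]) auto
qed

lemma ord_even_zero: "ord_even (ord_zero::'o::wellorder)"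
proof -
  have "l = ord_zero" if "l \<le> (ord_zero::'o)" for l
    using that ord_zero_le[of l] by simp
  then show ?thesis unfolding ord_even_def ord_odd_def by fastforce
qed

lemma ord_zero_less_if_ord_odd: "ord_odd (a::'o::wellorder) \<Longrightarrow> ord_zero < a"
  using ord_even_zero[where 'o='o] ord_zero_le[of a] unfolding ord_even_def
  by (metis order.not_eq_order_implies_strict)

lemma ord_sup_upper:
  assumes "omega1_plus_one (T::'o::wellorder itself)" and "b \<in> S"
  shows "b \<le> ord_sup (S::'o set)"
proof -
  have "\<forall>b\<in>S. b \<le> ord_sup S"
    unfolding ord_sup_def by (rule LeastI[of _ omega1]) (use le_omega1[OF assms(1)] in blast)
  then show ?thesis using assms(2) by blast
qed

lemma ord_sup_least: "(\<And>b. b \<in> S \<Longrightarrow> b \<le> a) \<Longrightarrow> ord_sup (S::'o::wellorder set) \<le> a"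
  unfolding ord_sup_def by (rule Least_le) blast

lemma Fclass_subset_topspace: "Fclass Y a A \<Longrightarrow> A \<subseteq> topspace Y"
proof (induction rule: Fclass.induct)
  case (suslin A)
  then show ?case by (rule suslinF_subset_topspace)
qed (auto simp: closedin_subset)

lemma Fclass_mono:
  assumes A: "Fclass Y b A" and "b \<le> c" and c: "c < omega1"
  shows "Fclass Y c A"
proof (cases "b = c")
  case False
  then have "b < c" using \<open>b \<le> c\<close> by simp
  then have c0: "ord_zero < c" using ord_zero_le[of b] by (rule le_less_trans[rotated])
  show ?thesis
  proof (cases "ord_odd c")
    case True
    have "Fclass Y c (\<Union>{A})"
      by (rule Fclass.union[OF c0 c True]) (use A \<open>b < c\<close> in auto)
    then show ?thesis by simp
  next
    case False
    then have "Fclass Y c (topspace Y \<inter> \<Inter>{A})"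
      by (intro Fclass.inter[OF c0 c]) (use A \<open>b < c\<close> in \<open>auto simp: ord_even_def\<close>)
    then show ?thesis using Fclass_subset_topspace[OF A] by (simp add: Int_absorb1)
  qed
qed (use A in simp)

lemma Fclass_ord_zeroD:
  assumes "Fclass Y (ord_zero::'o::wellorder) A" and "(ord_zero::'o) < omega1"
  shows "closedin Y A"
  using assms(1)
proof (cases rule: Fclass.cases)
  case suslin
  then show ?thesis using assms(2) by simp
qed auto

lemma Fclass_oddD:
  assumes "Fclass Y a A" and "a < omega1" and "ord_odd a"
  shows "\<exists>\<A>. countable \<A> \<and> (\<forall>B\<in>\<A>. \<exists>b<a. Fclass Y b B) \<and> A = \<Union>\<A>"
  using assms(1)
proof (cases rule: Fclass.cases)
  case closed
  then show ?thesis using assms(3) ord_even_zero unfolding ord_even_def by blast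
next
  case (inter \<A>)
  then show ?thesis using assms(3) unfolding ord_even_def by blast
next
  case suslin
  then show ?thesis using assms(2) by simp
qed blast

lemma Fclass_evenD:
  assumes "Fclass Y a A" and "a < omega1" and "ord_even a" and "ord_zero < a"
  shows "\<exists>\<A>. countable \<A> \<and> (\<forall>B\<in>\<A>. \<exists>b<a. Fclass Y b B) \<and> A = topspace Y \<inter> \<Inter>\<A>"
  using assms(1)
proof (cases rule: Fclass.cases)
  case closed
  then show ?thesis using assms(4) by simp
next
  case (union \<A>)
  then show ?thesis using assms(3) unfolding ord_even_def by blast
next
  case suslin
  then show ?thesis using assms(2) by simp
qed blast

lemma Fclass_Un:
  assumes "Fclass Y a A" and "Fclass Y a B" and "a < omega1"
  shows "Fclass Y a (A \<union> B)"
  using assms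
proof (induction a arbitrary: A B rule: less_induct)
  case (less a)
  consider "a = ord_zero" | "ord_zero < a" "ord_odd a" | "ord_zero < a" "ord_even a"
    using ord_zero_le[of a] unfolding ord_even_def by (metis order.not_eq_order_implies_strict)
  then show ?case
  proof cases
    case 1
    then have "closedin Y A" "closedin Y B"
      using Fclass_ord_zeroD less.prems by blast+
    then show ?thesis using 1 by (simp add: Fclass.closed closedin_Un)
  next
    case 2
    obtain \<A> where \<A>: "countable \<A>" "\<forall>A\<in>\<A>. \<exists>b<a. Fclass Y b A" "A = \<Union>\<A>"
      using Fclass_oddD[OF less.prems(1,3) 2(2)] by blast
    obtain \<B> where \<B>: "countable \<B>" "\<forall>B\<in>\<B>. \<exists>b<a. Fclass Y b B" "B = \<Union>\<B>"
      using Fclass_oddD[OF less.prems(2,3) 2(2)] by blast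
    have "Fclass Y a (\<Union>(\<A> \<union> \<B>))"
      using 2 \<A> \<B> less.prems(3) by (intro Fclass.union) auto
    then show ?thesis using \<A>(3) \<B>(3) by simp
  next
    case 3
    obtain \<A> where \<A>: "countable \<A>" "\<forall>A\<in>\<A>. \<exists>b<a. Fclass Y b A" "A = topspace Y \<inter> \<Inter>\<A>"
      using Fclass_evenD[OF less.prems(1,3) 3(2,1)] by blast
    obtain \<B> where \<B>: "countable \<B>" "\<forall>B\<in>\<B>. \<exists>b<a. Fclass Y b B" "B = topspace Y \<inter> \<Inter>\<B>"
      using Fclass_evenD[OF less.prems(2,3) 3(2,1)] by blast
    define \<C> where "\<C> = (\<lambda>(P, Q). P \<union> Q) ` (\<A> \<times> \<B>)"
    have "\<exists>b<a. Fclass Y b C" if "C \<in> \<C>" for C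
    proof -
      obtain P Q where PQ: "P \<in> \<A>" "Q \<in> \<B>" "C = P \<union> Q"
        using \<open>C \<in> \<C>\<close> unfolding \<C>_def by blast
      then obtain b1 b2 where b: "b1 < a" "Fclass Y b1 P" "b2 < a" "Fclass Y b2 Q"
        using \<A>(2) \<B>(2) by blast
      define b where "b = max b1 b2"
      have "b < a" "b < omega1" using b less.prems(3) unfolding b_def by auto
      then have "Fclass Y b P" "Fclass Y b Q"
        using Fclass_mono[OF b(2)] Fclass_mono[OF b(4)] unfolding b_def by auto
      then have "Fclass Y b C"
        using less.IH[OF \<open>b < a\<close>] \<open>b < omega1\<close> PQ(3) by simp
      then show ?thesis using \<open>b < a\<close> by blast
    qed
    moreover have "countable \<C>" unfolding \<C>_def using \<A>(1) \<B>(1) by simp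
    ultimately have "Fclass Y a (topspace Y \<inter> \<Inter>\<C>)"
      using 3 less.prems(3) by (intro Fclass.inter) auto
    moreover have "topspace Y \<inter> \<Inter>\<C> = A \<union> B"
      unfolding \<A>(3) \<B>(3) \<C>_def by blast
    ultimately show ?thesis by simp
  qed
qed

lemma Fclass_finite_Union:
  assumes "a < omega1" and "finite \<A>" and "\<forall>A\<in>\<A>. \<exists>b\<le>a. Fclass Y b A"
  shows "Fclass Y a (\<Union>\<A>)"
  using assms(2,3)
proof (induction rule: finite_induct)
  case empty
  have "Fclass Y ord_zero {}" by (simp add: Fclass.closed)
  then show ?case using Fclass_mono[OF _ ord_zero_le assms(1)] by simp
next
  case (insert A \<A>)
  then have "Fclass Y a A" using Fclass_mono assms(1) by blast
  then show ?case using insert Fclass_Un[OF _ _ assms(1)] by simp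
qed

lemma suslinF_Int_closedin:
  assumes "suslinF Y A" and "closedin Y C"
  shows "suslinF Y (C \<inter> A)"
proof -
  obtain F where F: "\<forall>s. closedin Y (F s)" and A: "A = (\<Union>\<sigma>::nat\<Rightarrow>nat. \<Inter>k. F (map \<sigma> [0..<Suc k]))"
    using assms(1) unfolding suslinF_def by blast
  have "C \<inter> A = (\<Union>\<sigma>::nat\<Rightarrow>nat. \<Inter>k. C \<inter> F (map \<sigma> [0..<Suc k]))"
    unfolding A by blast
  moreover have "\<forall>s. closedin Y (C \<inter> F s)" using F assms(2) by auto
  ultimately show ?thesis unfolding suslinF_def by (intro exI[of _ "\<lambda>s. C \<inter> F s"] conjI)
qed

lemma Fclass_Union_ord_odd:
  assumes "a < omega1" and "ord_odd a" and "countable \<A>" and "\<forall>A\<in>\<A>. \<exists>b\<le>a. Fclass Y b A"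
  shows "Fclass Y a (\<Union>\<A>)"
proof -
  have "\<exists>\<C>. countable \<C> \<and> (\<forall>C\<in>\<C>. \<exists>b<a. Fclass Y b C) \<and> A = \<Union>\<C>" if "A \<in> \<A>" for A
  proof -
    obtain b where "b \<le> a" "Fclass Y b A" using assms(4) \<open>A \<in> \<A>\<close> by blast
    show ?thesis
    proof (cases "b = a")
      case True
      then show ?thesis using Fclass_oddD \<open>Fclass Y b A\<close> assms(1,2) by blast
    next
      case False
      then have "b < a" using \<open>b \<le> a\<close> by simp
      then show ?thesis using \<open>Fclass Y b A\<close> by (intro exI[of _ "{A}"]) auto
    qed
  qed
  then obtain g where g: "\<And>A. A \<in> \<A> \<Longrightarrow> countable (g A)"
    "\<And>A. A \<in> \<A> \<Longrightarrow> \<forall>C\<in>g A. \<exists>b<a. Fclass Y b C" "\<And>A. A \<in> \<A> \<Longrightarrow> A = \<Union>(g A)"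
    by metis
  have "Fclass Y a (\<Union>(\<Union>A\<in>\<A>. g A))"
    using ord_zero_less_if_ord_odd[OF assms(2)] assms(1,2,3) g(1,2)
    by (intro Fclass.union) auto
  moreover have "\<Union>(\<Union>A\<in>\<A>. g A) = \<Union>\<A>" using g(3) by blast
  ultimately show ?thesis by simp
qed

lemma Fclass_Union_ord_even:
  assumes T: "omega1_plus_one (T::'o::wellorder itself)"
    and "(a::'o) < omega1" and "ord_even a" and "countable \<A>" and "\<forall>A\<in>\<A>. \<exists>b\<le>a. Fclass Y b A"
  shows "Fclass Y (osucc a) (\<Union>\<A>)"
proof (rule Fclass.union)
  have "a < osucc a" using less_osucc[OF assms(2)] .
  then show "ord_zero < osucc a" using ord_zero_le[of a] by (rule le_less_trans[rotated])
  show "osucc a < omega1" using osucc_less_omega1[OF T assms(2)] .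
  show "ord_odd (osucc a)" using ord_odd_osucc[OF assms(3,2)] .
  show "\<forall>A\<in>\<A>. \<exists>b<osucc a. Fclass Y b A"
    using assms(5) \<open>a < osucc a\<close> le_less_trans by blast
qed (rule assms(4))

lemma Compl_le: "Fclass Y a A \<Longrightarrow> Compl (T::'o::wellorder itself) Y A \<le> a"
  unfolding Compl_def by (rule Least_le)

lemma Fclass_Compl: "Fclass Y (a::'o::wellorder) A \<Longrightarrow> Fclass Y (Compl (T::'o itself) Y A) A"
  unfolding Compl_def by (rule LeastI)

lemma Compl_at_le_Compl:
  assumes "X \<subseteq> topspace Y" and "y \<in> topspace Y"
  shows "Compl_at T Y X y \<le> Compl T Y X"
proof -
  have "neighbourhood Y (topspace Y) y" using assms(2) unfolding neighbourhood_def by auto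
  moreover have "Y closure_of topspace Y \<inter> X = X" using assms(1) by auto
  ultimately have "\<exists>U. neighbourhood Y U y \<and> Compl T Y X = Compl T Y (Y closure_of U \<inter> X)"
    by metis
  then show ?thesis unfolding Compl_at_def by (rule Least_le)
qed

lemma Union_closure_Int_eq:
  assumes "X \<subseteq> \<Union>(V ` N)" and "\<And>y. y \<in> N \<Longrightarrow> V y \<subseteq> Y closure_of U y"
  shows "(\<Union>y\<in>N. Y closure_of U y \<inter> X) = X"
  using assms by blast

locale analytic_subspace =
  fixes T :: "'o::wellorder itself" and Y :: "'a topology" and X :: "'a set"
  assumes omega1_plus_one: "omega1_plus_one T"
    and subset_topspace: "X \<subseteq> topspace Y"
    and suslinF: "suslinF Y X"
    and Lindelof: "Lindelof_space (subtopology Y X)"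
begin

lemma Fclass_closure_Int: "Fclass Y (Compl T Y (Y closure_of U \<inter> X)) (Y closure_of U \<inter> X)"
  by (rule Fclass_Compl[OF Fclass.suslin]) (rule suslinF_Int_closedin[OF suslinF closedin_closure_of])

lemma Compl_at_witnesses:
  obtains U V where "\<And>y. y \<in> topspace Y \<Longrightarrow> Compl_at T Y X y = Compl T Y (Y closure_of U y \<inter> X)"
    "\<And>y. y \<in> topspace Y \<Longrightarrow> openin Y (V y)" "\<And>y. y \<in> topspace Y \<Longrightarrow> y \<in> V y"
    "\<And>y. y \<in> topspace Y \<Longrightarrow> V y \<subseteq> Y closure_of U y"
proof -
  have "\<exists>U V. openin Y V \<and> y \<in> V \<and> V \<subseteq> Y closure_of U
      \<and> Compl_at T Y X y = Compl T Y (Y closure_of U \<inter> X)" if "y \<in> topspace Y" for y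
  proof -
    have "neighbourhood Y (topspace Y) y" using that unfolding neighbourhood_def by auto
    then have "\<exists>a::'o. \<exists>U. neighbourhood Y U y \<and> a = Compl T Y (Y closure_of U \<inter> X)" by blast
    then have "\<exists>U. neighbourhood Y U y \<and> Compl_at T Y X y = Compl T Y (Y closure_of U \<inter> X)"
      unfolding Compl_at_def by (rule LeastI_ex)
    then obtain U where U: "neighbourhood Y U y" "Compl_at T Y X y = Compl T Y (Y closure_of U \<inter> X)"
      by blast
    then obtain V where "openin Y V" "y \<in> V" "V \<subseteq> U" unfolding neighbourhood_def by blast
    moreover have "V \<subseteq> Y closure_of U"
      using \<open>V \<subseteq> U\<close> openin_subset[OF \<open>openin Y V\<close>] closure_of_subset_Int[of Y U] by blast
    ultimately show ?thesis using U(2) by blast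
  qed
  then have "\<forall>y\<in>topspace Y. \<exists>U V. openin Y V \<and> y \<in> V \<and> V \<subseteq> Y closure_of U
      \<and> Compl_at T Y X y = Compl T Y (Y closure_of U \<inter> X)" by blast
  from bchoice[OF this] obtain U where "\<forall>y\<in>topspace Y. \<exists>V. openin Y V \<and> y \<in> V
      \<and> V \<subseteq> Y closure_of U y \<and> Compl_at T Y X y = Compl T Y (Y closure_of U y \<inter> X)" ..
  from bchoice[OF this] obtain V where "\<forall>y\<in>topspace Y. openin Y (V y) \<and> y \<in> V y
      \<and> V y \<subseteq> Y closure_of U y \<and> Compl_at T Y X y = Compl T Y (Y closure_of U y \<inter> X)" ..
  then show thesis by (intro that[of U V]) auto
qed

lemma Compl_at_le_Compl_cloc: "y \<in> topspace Y \<Longrightarrow> Compl_at T Y X y \<le> Compl_cloc T Y X"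
  unfolding Compl_cloc_def by (rule ord_sup_upper[OF omega1_plus_one]) blast

lemma Compl_at_le_Compl_loc: "x \<in> X \<Longrightarrow> Compl_at T Y X x \<le> Compl_loc T Y X"
  unfolding Compl_loc_def by (rule ord_sup_upper[OF omega1_plus_one]) blast

lemma Compl_loc_le_Compl_cloc: "Compl_loc T Y X \<le> Compl_cloc T Y X"
  unfolding Compl_loc_def
  by (rule ord_sup_least) (use Compl_at_le_Compl_cloc subset_topspace in blast)

lemma Compl_cloc_le_Compl: "Compl_cloc T Y X \<le> Compl T Y X"
  unfolding Compl_cloc_def
  by (rule ord_sup_least) (use Compl_at_le_Compl[OF subset_topspace] in blast)

lemma countable_cover_by_local_pieces:
  obtains \<A> where "countable \<A>" "\<Union>\<A> = X" "\<forall>A\<in>\<A>. \<exists>b\<le>Compl_loc T Y X. Fclass Y b A"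
proof -
  obtain U V where U_Compl: "\<And>y. y \<in> topspace Y \<Longrightarrow> Compl_at T Y X y = Compl T Y (Y closure_of U y \<inter> X)"
    and V_open: "\<And>y. y \<in> topspace Y \<Longrightarrow> openin Y (V y)"
    and V_mem: "\<And>y. y \<in> topspace Y \<Longrightarrow> y \<in> V y"
    and V_sub: "\<And>y. y \<in> topspace Y \<Longrightarrow> V y \<subseteq> Y closure_of U y"
    using Compl_at_witnesses by blast
  have "\<forall>W\<in>V ` X. openin Y W" "X \<subseteq> \<Union>(V ` X)"
    using V_open V_mem subset_topspace by blast+
  then obtain \<V> where \<V>: "countable \<V>" "\<V> \<subseteq> V ` X" "X \<subseteq> \<Union>\<V>"
    using Lindelof[unfolded Lindelof_space_subtopology_subset[OF subset_topspace], rule_format,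
        of "V ` X"] by blast
  then obtain N where N: "countable N" "N \<subseteq> X" "\<V> = V ` N"
    using countable_subset_image[of \<V> V X] by blast
  have N_sub: "N \<subseteq> topspace Y" using N(2) subset_topspace by blast
  show thesis
  proof (rule that)
    show "countable ((\<lambda>y. Y closure_of U y \<inter> X) ` N)" using N(1) by simp
    have "V y \<subseteq> Y closure_of U y" if "y \<in> N" for y using V_sub N_sub that by blast
    then show "(\<Union>y\<in>N. Y closure_of U y \<inter> X) = X"
      by (rule Union_closure_Int_eq[OF \<V>(3)[unfolded N(3)]])
    show "\<forall>A\<in>(\<lambda>y. Y closure_of U y \<inter> X) ` N. \<exists>b\<le>Compl_loc T Y X. Fclass Y b A"
    proof
      fix A assume "A \<in> (\<lambda>y. Y closure_of U y \<inter> X) ` N"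
      then obtain x where "x \<in> X" "A = Y closure_of U x \<inter> X" using N(2) by blast
      moreover have "Compl T Y A \<le> Compl_loc T Y X"
        using calculation Compl_at_le_Compl_loc[of x] U_Compl[of x] subset_topspace by auto
      ultimately show "\<exists>b\<le>Compl_loc T Y X. Fclass Y b A" using Fclass_closure_Int by blast
    qed
  qed
qed

lemma Compl_le_Compl_loc_if_ord_odd:
  assumes "ord_odd (Compl_loc T Y X)"
  shows "Compl T Y X \<le> Compl_loc T Y X"
proof (cases "Compl_loc T Y X < omega1")
  case True
  obtain \<A> where "countable \<A>" "\<Union>\<A> = X" "\<forall>A\<in>\<A>. \<exists>b\<le>Compl_loc T Y X. Fclass Y b A"
    using countable_cover_by_local_pieces .
  then have "Fclass Y (Compl_loc T Y X) X"
    using Fclass_Union_ord_odd[OF True assms] by blast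
  then show ?thesis by (rule Compl_le)
next
  case False
  then show ?thesis using le_omega1[OF omega1_plus_one] by (metis antisym_conv2)
qed

lemma Compl_le_osucc_Compl_loc: "Compl T Y X \<le> osucc (Compl_loc T Y X)"
proof (cases "Compl_loc T Y X < omega1 \<and> ord_even (Compl_loc T Y X)")
  case True
  obtain \<A> where "countable \<A>" "\<Union>\<A> = X" "\<forall>A\<in>\<A>. \<exists>b\<le>Compl_loc T Y X. Fclass Y b A"
    using countable_cover_by_local_pieces .
  then have "Fclass Y (osucc (Compl_loc T Y X)) X"
    using Fclass_Union_ord_even[OF omega1_plus_one] True by blast
  then show ?thesis by (rule Compl_le)
next
  case False
  then consider "ord_odd (Compl_loc T Y X)" | "Compl_loc T Y X = omega1"
    using le_omega1[OF omega1_plus_one, of "Compl_loc T Y X"] unfolding ord_even_def by force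
  then show ?thesis
    using Compl_le_Compl_loc_if_ord_odd le_osucc le_omega1[OF omega1_plus_one] order_trans
    by metis
qed

lemma Compl_le_Compl_loc_if_parity:
  assumes "ord_odd (Compl_loc T Y X) \<or> ord_even (Compl T Y X)"
  shows "Compl T Y X \<le> Compl_loc T Y X"
proof (rule ccontr)
  assume "\<not> ?thesis"
  then have less: "Compl_loc T Y X < Compl T Y X" by simp
  then have "Compl T Y X = osucc (Compl_loc T Y X)"
    using osucc_le Compl_le_osucc_Compl_loc antisym by blast
  moreover have "ord_even (Compl_loc T Y X)"
    using assms Compl_le_Compl_loc_if_ord_odd less unfolding ord_even_def by auto
  ultimately show False
    using assms ord_odd_osucc[OF _ less] unfolding ord_even_def by auto
qed

lemma compact_Compl_le_Compl_at:
  assumes "compact_space Y" and "topspace Y \<noteq> {}"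
  obtains y where "y \<in> topspace Y" "Compl T Y X \<le> Compl_at T Y X y"
proof -
  obtain U V where U_Compl: "\<And>y. y \<in> topspace Y \<Longrightarrow> Compl_at T Y X y = Compl T Y (Y closure_of U y \<inter> X)"
    and V_open: "\<And>y. y \<in> topspace Y \<Longrightarrow> openin Y (V y)"
    and V_mem: "\<And>y. y \<in> topspace Y \<Longrightarrow> y \<in> V y"
    and V_sub: "\<And>y. y \<in> topspace Y \<Longrightarrow> V y \<subseteq> Y closure_of U y"
    using Compl_at_witnesses by blast
  have "\<forall>W\<in>V ` topspace Y. openin Y W" "topspace Y \<subseteq> \<Union>(V ` topspace Y)"
    using V_open V_mem by blast+
  then obtain \<F> where "finite \<F>" "\<F> \<subseteq> V ` topspace Y" "topspace Y \<subseteq> \<Union>\<F>"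
    using assms(1) unfolding compact_space_def compactin_def by meson
  then obtain N where N: "finite N" "N \<subseteq> topspace Y" "topspace Y \<subseteq> \<Union>(V ` N)"
    using finite_subset_image[of \<F> V "topspace Y"] by blast
  then have "N \<noteq> {}" using assms(2) by blast
  define m where "m = Max (Compl_at T Y X ` N)"
  have "m \<in> Compl_at T Y X ` N" unfolding m_def using N(1) \<open>N \<noteq> {}\<close> by (intro Max_in) auto
  then obtain y where y: "y \<in> N" "m = Compl_at T Y X y" by blast
  have "Compl T Y X \<le> m"
  proof (cases "m < omega1")
    case True
    have "V y \<subseteq> Y closure_of U y" if "y \<in> N" for y using V_sub N(2) that by blast
    then have X_eq: "(\<Union>y\<in>N. Y closure_of U y \<inter> X) = X"
      by (rule Union_closure_Int_eq[OF subset_trans[OF subset_topspace N(3)]])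
    have "Fclass Y m (\<Union>y\<in>N. Y closure_of U y \<inter> X)"
    proof (rule Fclass_finite_Union[OF True])
      show "\<forall>A\<in>(\<lambda>y. Y closure_of U y \<inter> X) ` N. \<exists>b\<le>m. Fclass Y b A"
      proof
        fix A assume "A \<in> (\<lambda>y. Y closure_of U y \<inter> X) ` N"
        then obtain y where y: "y \<in> N" "A = Y closure_of U y \<inter> X" by blast
        then have "Compl T Y A = Compl_at T Y X y" using U_Compl N(2) by auto
        also have "\<dots> \<le> m" unfolding m_def using N(1) y(1) by simp
        finally show "\<exists>b\<le>m. Fclass Y b A" using Fclass_closure_Int y(2) by blast
      qed
    qed (use N(1) in simp)
    then show ?thesis unfolding X_eq by (rule Compl_le)
  next
    case False
    then show ?thesis using le_omega1[OF omega1_plus_one] by (metis antisym_conv2)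
  qed
  then show thesis using that y N(2) by blast
qed

lemma Compl_eq_Compl_cloc_if_compact:
  assumes "compact_space Y"
  shows "Compl T Y X = Compl_cloc T Y X"
proof (cases "topspace Y = {}")
  case True
  then have "Fclass Y (ord_zero::'o) X" using subset_topspace by (simp add: Fclass.closed)
  then have "Compl T Y X = ord_zero" using Compl_le ord_zero_le antisym by blast
  then show ?thesis using Compl_cloc_le_Compl ord_zero_le antisym by metis
next
  case False
  then obtain y where "y \<in> topspace Y" "Compl T Y X \<le> Compl_at T Y X y"
    using compact_Compl_le_Compl_at[OF assms] by blast
  then show ?thesis
    using Compl_at_le_Compl_cloc Compl_cloc_le_Compl by (meson antisym order_trans)
qed

end

theorem lemma5p9:
  fixes Y :: "'a topology" and X :: "'a set"
    and K :: "'b topology" and f :: "'a \<Rightarrow> 'b"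
    and T :: "'o::wellorder itself"
  assumes "omega1_plus_one T"
    and "tychonoff_space Y"
    and "X \<subseteq> topspace Y"
    and "K_analytic_via Y X K f"
  shows "Compl_loc T Y X \<le> Compl_cloc T Y X
       \<and> Compl_cloc T Y X \<le> Compl T Y X
       \<and> Compl T Y X \<le> osucc (Compl_loc T Y X)
       \<and> ((ord_odd (Compl_loc T Y X) \<or> ord_even (Compl T Y X)) \<longrightarrow>
            Compl_loc T Y X = Compl_cloc T Y X \<and> Compl_cloc T Y X = Compl T Y X)
       \<and> (compact_space Y \<longrightarrow>
            Compl T Y X = Compl_cloc T Y X
          \<and> (\<forall>y\<in>topspace Y. Compl_at T Y X y \<le> Compl_cloc T Y X)
          \<and> (topspace Y \<noteq> {} \<longrightarrow> (\<exists>y\<in>topspace Y. Compl_at T Y X y = Compl_cloc T Y X)))"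
proof -
  have "Hausdorff_space Y" using assms(2) unfolding tychonoff_space_def by blast
  interpret analytic_subspace T Y X
    using assms K_analytic_via_suslinF[OF \<open>Hausdorff_space Y\<close>] K_analytic_via_Lindelof_space
    by unfold_locales blast+
  have parity: "Compl_loc T Y X = Compl_cloc T Y X \<and> Compl_cloc T Y X = Compl T Y X"
    if "ord_odd (Compl_loc T Y X) \<or> ord_even (Compl T Y X)"
    using Compl_le_Compl_loc_if_parity[OF that] Compl_loc_le_Compl_cloc Compl_cloc_le_Compl
    by (meson antisym order_trans)
  have attained: "\<exists>y\<in>topspace Y. Compl_at T Y X y = Compl_cloc T Y X"
    if compact: "compact_space Y" and nonempty: "topspace Y \<noteq> {}"
  proof -
    obtain y where "y \<in> topspace Y" "Compl T Y X \<le> Compl_at T Y X y"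
      using compact_Compl_le_Compl_at[OF compact nonempty] .
    then show ?thesis
      using Compl_at_le_Compl_cloc Compl_eq_Compl_cloc_if_compact[OF compact] antisym by metis
  qed
  show ?thesis
    using Compl_loc_le_Compl_cloc Compl_cloc_le_Compl Compl_le_osucc_Compl_loc parity
      Compl_eq_Compl_cloc_if_compact Compl_at_le_Compl_cloc attained
    by blast
qed

end
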